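(* Let $q$ be a prime power, let $n_1,n_2,n_3,n_4$ be positive integers with $n=n_1+n_2+n_3+n_4$, and let $G=U_{n_1,n_2,n_3,n_4}=1+\mathfrak{g}$ be the unipotent radical of the standard parabolic subgroup of $\mathrm{GL}_n(\mathbb{F}_q)$ attached to the block sizes $(n_1,n_2,n_3,n_4)$. Here $\mathfrak{g}$ is the algebra of $n\times n$ matrices over $\mathbb{F}_q$ which, written in $4\times 4$ block form $(X_{ij})$ with $X_{ij}$ of size $n_i\times n_j$, satisfy $X_{ij}=0$ whenever $i\ge j$. Then $G$ is of good type: for every $S\in\mathfrak{g}^t$, the linear form $\lambda_S\in\mathfrak{g}^*$, $\lambda_S(X)=\operatorname{tr}(SX)$, admits an associative polarization.
   Context: $\mathfrak{g}^t=\{X^t: X\in\mathfrak{g}\}$. For $\lambda\in\mathfrak{g}^*$, define the skew-symmetric bilinear form $B_\lambda(x,y)=\lambda(xy-yx)$ on $\mathfrak{g}$. A subspace $\mathfrak{p}\subseteq\mathfrak{g}$ is isotropic if $B_\lambda(x,y)=0$ for all $x,y\in\mathfrak{p}$, and a polarization of $\lambda$ is a maximal isotropic subspace of $\mathfrak{g}$ for $B_\lambda$. An associative polarization of $\lambda$ is a polarization $\mathfrak{p}$ that is an associative subalgebra of $\mathfrak{g}$ and satisfies $\lambda(\mathfrak{p}^2)=0$, where $\mathfrak{p}^2$ is the span of products $xy$ with $x,y\in\mathfrak{p}$. A pattern group $G=1+\mathfrak{g}$ over $\mathbb{F}_q$ is said to be of good type if $\lambda_S$ admits an associative polarization for every $S\in\mathfrak{g}^t$.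 *)

theory Defs
  imports "Jordan_Normal_Form.Matrix"
begin

definition blk :: "nat \<Rightarrow> nat \<Rightarrow> nat \<Rightarrow> nat \<Rightarrow> nat" where
  "blk n1 n2 n3 i = (if i < n1 then 0 else if i < n1 + n2 then 1
                     else if i < n1 + n2 + n3 then 2 else 3)"

definition pattern_alg :: "nat \<Rightarrow> nat \<Rightarrow> nat \<Rightarrow> nat \<Rightarrow> 'a::field mat set" where
  "pattern_alg n1 n2 n3 n4 =
     {X \<in> carrier_mat (n1+n2+n3+n4) (n1+n2+n3+n4).
        \<forall>i j. i < n1+n2+n3+n4 \<longrightarrow> j < n1+n2+n3+n4 \<longrightarrow>
              blk n1 n2 n3 j \<le> blk n1 n2 n3 i \<longrightarrow> X $$ (i, j) = 0}"

definition mat_subspace :: "nat \<Rightarrow> 'a::field mat set \<Rightarrow> bool" where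
  "mat_subspace n V \<longleftrightarrow> V \<subseteq> carrier_mat n n \<and> 0\<^sub>m n n \<in> V \<and>
     (\<forall>x\<in>V. \<forall>y\<in>V. x + y \<in> V) \<and> (\<forall>c. \<forall>x\<in>V. c \<cdot>\<^sub>m x \<in> V)"

definition mtrace :: "'a::comm_ring_1 mat \<Rightarrow> 'a" where
  "mtrace A = (\<Sum>i<dim_row A. A $$ (i, i))"

definition lam :: "'a::field mat \<Rightarrow> 'a mat \<Rightarrow> 'a" where
  "lam S X = mtrace (S * X)"

definition Bform :: "('a::field mat \<Rightarrow> 'a) \<Rightarrow> 'a mat \<Rightarrow> 'a mat \<Rightarrow> 'a" where
  "Bform l x y = l (x * y - y * x)"

definition isotropic :: "('a::field mat \<Rightarrow> 'a) \<Rightarrow> 'a mat set \<Rightarrow> bool" where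
  "isotropic l P \<longleftrightarrow> (\<forall>x\<in>P. \<forall>y\<in>P. Bform l x y = 0)"

definition polarization :: "nat \<Rightarrow> 'a::field mat set \<Rightarrow> ('a mat \<Rightarrow> 'a) \<Rightarrow> 'a mat set \<Rightarrow> bool" where
  "polarization n g l P \<longleftrightarrow> mat_subspace n P \<and> P \<subseteq> g \<and> isotropic l P \<and>
     (\<forall>Q. mat_subspace n Q \<and> Q \<subseteq> g \<and> isotropic l Q \<and> P \<subseteq> Q \<longrightarrow> Q = P)"

definition prod_span :: "nat \<Rightarrow> 'a::field mat set \<Rightarrow> 'a mat set" where
  "prod_span n P = \<Inter> {V. mat_subspace n V \<and> {x * y | x y. x \<in> P \<and> y \<in> P} \<subseteq> V}"

definition assoc_polarization :: "nat \<Rightarrow> 'a::field mat set \<Rightarrow> ('a mat \<Rightarrow> 'a) \<Rightarrow> 'a mat set \<Rightarrow> bool" where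
  "assoc_polarization n g l P \<longleftrightarrow> polarization n g l P \<and>
     (\<forall>x\<in>P. \<forall>y\<in>P. x * y \<in> P) \<and> (\<forall>z \<in> prod_span n P. l z = 0)"

end

theory Submission
  imports Defs
begin

(* Number the blocks 0, ..., 3 and let V_k (flag_space k) be the span of the standard basis
   vectors lying in blocks < k, so that every X in g maps V_(k+1) into V_k. Put
   W = {v in V_2. S v in V_3} (flag_preimage) and let P (flag_polarization) consist of the
   X in g with S X V_3 <= V_3 and (S X v)_r = 0 for all v in W and all r in block 2.
   Expanding tr(S X Y) = sum_i (S X y_i)_i over the columns y_i in V_(block i) of Y gives
   lambda_S(X Y) = 0 for X, Y in P: X kills the columns in blocks 0 and 1, the columns in
   block 2 lie in W, and those in block 3 are handled by S X V_3 <= V_3. The same flag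
   estimates make P closed under products. For maximality, an X in g that is
   B_lambda-orthogonal to P is tested against the rank one matrices u e_r^T with u in V_3,
   r in block 3, or u in W, r in block 2: they lie in P, satisfy lambda_S(u e_r^T X) = 0,
   and lambda_S(X u e_r^T) = (S X u)_r yields the two conditions defining P. *)

lemma mult_mat_zero_vec: "A \<in> carrier_mat m n \<Longrightarrow> A *\<^sub>v 0\<^sub>v n = 0\<^sub>v m"
  by (intro eq_vecI) auto

lemma zero_mat_mult_vec: "v \<in> carrier_vec n \<Longrightarrow> 0\<^sub>m m n *\<^sub>v v = 0\<^sub>v m"
  by (intro eq_vecI) auto

lemma smult_mat_mult_vec:
  "A \<in> carrier_mat m n \<Longrightarrow> v \<in> carrier_vec n \<Longrightarrow> (c \<cdot>\<^sub>m A) *\<^sub>v v = c \<cdot>\<^sub>v (A *\<^sub>v v)"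
  by (intro eq_vecI) (auto simp: scalar_prod_def sum_distrib_left mult.assoc)

lemma col_eq_mult_unit_vec:
  "(A :: 'a::semiring_1 mat) \<in> carrier_mat m n \<Longrightarrow> i < n \<Longrightarrow> col A i = A *\<^sub>v unit_vec n i"
  by (intro eq_vecI) (auto simp: scalar_prod_right_unit)

section \<open>Associative polarizations of the trace form\<close>

context
  fixes n :: nat and S :: "'a::field mat"
  assumes S: "S \<in> carrier_mat n n"
begin

lemma lam_add:
  "X \<in> carrier_mat n n \<Longrightarrow> Y \<in> carrier_mat n n \<Longrightarrow> lam S (X + Y) = lam S X + lam S Y"
  using S by (simp add: lam_def mtrace_def mult_add_distrib_mat sum.distrib)

lemma lam_diff:
  "X \<in> carrier_mat n n \<Longrightarrow> Y \<in> carrier_mat n n \<Longrightarrow> lam S (X - Y) = lam S X - lam S Y"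
  using S by (simp add: lam_def mtrace_def mult_minus_distrib_mat sum_subtractf)

lemma lam_smult: "X \<in> carrier_mat n n \<Longrightarrow> lam S (c \<cdot>\<^sub>m X) = c * lam S X"
  using S by (simp add: lam_def mtrace_def mult_smult_distrib sum_distrib_left)

lemma lam_zero: "lam S (0\<^sub>m n n) = 0"
  using S by (simp add: lam_def mtrace_def)

lemma lam_mult:
  assumes X: "X \<in> carrier_mat n n" and Y: "Y \<in> carrier_mat n n"
  shows "lam S (X * Y) = (\<Sum>i<n. (S *\<^sub>v (X *\<^sub>v col Y i)) $ i)"
proof -
  have "(S * (X * Y)) $$ (i, i) = (S *\<^sub>v (X *\<^sub>v col Y i)) $ i" if "i < n" for i
  proof -
    have "(S * (X * Y)) $$ (i, i) = col (S * (X * Y)) i $ i"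
      using that S X Y by simp
    also have "\<dots> = (S *\<^sub>v (X *\<^sub>v col Y i)) $ i"
      by (simp only: col_mult2[OF S mult_carrier_mat[OF X Y] that] col_mult2[OF X Y that])
    finally show ?thesis .
  qed
  then show ?thesis
    using S by (simp add: lam_def mtrace_def)
qed

lemma mat_subspace_lam_kernel: "mat_subspace n {Z \<in> carrier_mat n n. lam S Z = 0}"
  unfolding mat_subspace_def by (auto simp: lam_add lam_smult lam_zero)

lemma assoc_polarizationI:
  assumes P: "mat_subspace n P" "P \<subseteq> g"
    and mult_closed: "\<And>X Y. X \<in> P \<Longrightarrow> Y \<in> P \<Longrightarrow> X * Y \<in> P"
    and lam_mult_zero: "\<And>X Y. X \<in> P \<Longrightarrow> Y \<in> P \<Longrightarrow> lam S (X * Y) = 0"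
    and maximal: "\<And>X. X \<in> g \<Longrightarrow> (\<And>Y. Y \<in> P \<Longrightarrow> lam S (X * Y) = lam S (Y * X)) \<Longrightarrow> X \<in> P"
  shows "assoc_polarization n g (lam S) P"
proof -
  have P_carrier: "P \<subseteq> carrier_mat n n"
    using P(1) by (simp add: mat_subspace_def)
  have isotropic: "isotropic (lam S) P"
  proof (unfold isotropic_def Bform_def, intro ballI)
    fix X Y assume "X \<in> P" "Y \<in> P"
    moreover from this have "X \<in> carrier_mat n n" "Y \<in> carrier_mat n n"
      using P_carrier by auto
    ultimately show "lam S (X * Y - Y * X) = 0"
      by (simp add: lam_diff lam_mult_zero)
  qed
  have "Q = P" if Q: "mat_subspace n Q" "Q \<subseteq> g" "isotropic (lam S) Q" "P \<subseteq> Q" for Q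
  proof
    have "X \<in> P" if X: "X \<in> Q" for X
    proof (rule maximal)
      show "X \<in> g" using X Q(2) by blast
      fix Y assume "Y \<in> P"
      then have "Y \<in> Q" "Y \<in> carrier_mat n n" "X \<in> carrier_mat n n"
        using Q(1,4) X P_carrier by (auto simp: mat_subspace_def)
      moreover have "lam S (X * Y - Y * X) = 0"
        using Q(3) X \<open>Y \<in> Q\<close> by (simp add: isotropic_def Bform_def)
      ultimately show "lam S (X * Y) = lam S (Y * X)"
        by (simp add: lam_diff)
    qed
    then show "Q \<subseteq> P" by blast
  qed (use that in blast)
  moreover have "{X * Y | X Y. X \<in> P \<and> Y \<in> P} \<subseteq> {Z \<in> carrier_mat n n. lam S Z = 0}"
    using P_carrier lam_mult_zero by fastforce
  then have "prod_span n P \<subseteq> {Z \<in> carrier_mat n n. lam S Z = 0}"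
    unfolding prod_span_def using mat_subspace_lam_kernel by blast
  ultimately show ?thesis
    using P isotropic mult_closed unfolding assoc_polarization_def polarization_def by blast
qed

end

section \<open>Strictly block upper triangular matrices and the standard flag\<close>

definition strict_block_upper :: "nat \<Rightarrow> (nat \<Rightarrow> nat) \<Rightarrow> 'a::field mat set" where
  "strict_block_upper n bk = {X \<in> carrier_mat n n. \<forall>i<n. \<forall>j<n. bk j \<le> bk i \<longrightarrow> X $$ (i, j) = 0}"

definition flag_space :: "nat \<Rightarrow> (nat \<Rightarrow> nat) \<Rightarrow> nat \<Rightarrow> 'a::field vec set" where
  "flag_space n bk k = {v \<in> carrier_vec n. \<forall>j<n. k \<le> bk j \<longrightarrow> v $ j = 0}"

lemma strict_block_upper_carrier: "X \<in> strict_block_upper n bk \<Longrightarrow> X \<in> carrier_mat n n"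
  by (simp add: strict_block_upper_def)

lemma strict_block_upper_nonzero:
  "X \<in> strict_block_upper n bk \<Longrightarrow> i < n \<Longrightarrow> j < n \<Longrightarrow> X $$ (i, j) \<noteq> 0 \<Longrightarrow> bk i < bk j"
  unfolding strict_block_upper_def by force

lemma strict_block_upper_mult:
  assumes X: "X \<in> strict_block_upper n bk" and Y: "Y \<in> strict_block_upper n bk"
  shows "X * Y \<in> strict_block_upper n bk"
proof -
  have carrier: "X \<in> carrier_mat n n" "Y \<in> carrier_mat n n"
    using X Y by (simp_all add: strict_block_upper_carrier)
  have "(X * Y) $$ (i, j) = 0" if ij: "i < n" "j < n" "bk j \<le> bk i" for i j
  proof -
    have "X $$ (i, k) * Y $$ (k, j) = 0" if "k < n" for k
      using strict_block_upper_nonzero[OF X ij(1) that] strict_block_upper_nonzero[OF Y that ij(2)] ij(3)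
      by fastforce
    then show ?thesis
      using ij carrier by (auto simp: scalar_prod_def intro!: sum.neutral)
  qed
  then show ?thesis
    using carrier by (simp add: strict_block_upper_def)
qed

lemma flag_space_mono: "k \<le> l \<Longrightarrow> flag_space n bk k \<subseteq> flag_space n bk l"
  by (auto simp: flag_space_def)

lemma flag_space_zero: "v \<in> flag_space n bk 0 \<Longrightarrow> v = 0\<^sub>v n"
  by (auto simp: flag_space_def)

lemma flag_space_add:
  "v \<in> flag_space n bk k \<Longrightarrow> w \<in> flag_space n bk k \<Longrightarrow> v + w \<in> flag_space n bk k"
  by (auto simp: flag_space_def)

lemma flag_space_smult: "v \<in> flag_space n bk k \<Longrightarrow> c \<cdot>\<^sub>v v \<in> flag_space n bk k"
  by (auto simp: flag_space_def)

lemma unit_vec_in_flag_space: "bk i < k \<Longrightarrow> unit_vec n i \<in> flag_space n bk k"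
  by (auto simp: flag_space_def unit_vec_def)

lemma col_in_flag_space: "X \<in> strict_block_upper n bk \<Longrightarrow> i < n \<Longrightarrow> col X i \<in> flag_space n bk (bk i)"
  unfolding flag_space_def strict_block_upper_def by auto

lemma strict_block_upper_mult_flag_space:
  assumes X: "X \<in> strict_block_upper n bk" and v: "v \<in> flag_space n bk (Suc k)"
  shows "X *\<^sub>v v \<in> flag_space n bk k"
proof -
  have carrier: "X \<in> carrier_mat n n" "v \<in> carrier_vec n"
    using X v by (simp_all add: strict_block_upper_carrier flag_space_def)
  have "(X *\<^sub>v v) $ j = 0" if j: "j < n" "k \<le> bk j" for j
  proof -
    have "X $$ (j, l) * v $ l = 0" if "l < n" for l
      using strict_block_upper_nonzero[OF X j(1) that] v j(2) that
      by (fastforce simp: flag_space_def)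
    then show ?thesis
      using j carrier by (auto simp: scalar_prod_def intro!: sum.neutral)
  qed
  then show ?thesis
    using carrier by (simp add: flag_space_def)
qed

definition rank_one :: "nat \<Rightarrow> 'a::field vec \<Rightarrow> nat \<Rightarrow> 'a mat" where
  "rank_one n u r = mat n n (\<lambda>(a, b). if b = r then u $ a else 0)"

context
  fixes n :: nat and u :: "'a::field vec" and r :: nat
  assumes u: "u \<in> carrier_vec n" and r: "r < n"
begin

lemma rank_one_carrier: "rank_one n u r \<in> carrier_mat n n"
  by (simp add: rank_one_def)

lemma rank_one_mult_vec:
  assumes w: "w \<in> carrier_vec n"
  shows "rank_one n u r *\<^sub>v w = w $ r \<cdot>\<^sub>v u"
proof (rule eq_vecI)
  fix i assume "i < dim_vec (w $ r \<cdot>\<^sub>v u)"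
  then have "i < n" using u by simp
  have "(rank_one n u r *\<^sub>v w) $ i = (\<Sum>l = 0..<n. (if l = r then u $ i else 0) * w $ l)"
    using \<open>i < n\<close> w by (simp add: rank_one_def scalar_prod_def)
  also have "\<dots> = u $ i * w $ r"
    using r by (simp add: if_distrib[of "\<lambda>x. x * _"] cong: if_cong)
  finally show "(rank_one n u r *\<^sub>v w) $ i = (w $ r \<cdot>\<^sub>v u) $ i"
    using \<open>i < n\<close> u by (simp add: mult.commute)
qed (use u in \<open>simp add: rank_one_def\<close>)

lemma col_rank_one: "i < n \<Longrightarrow> col (rank_one n u r) i = (if i = r then u else 0\<^sub>v n)"
  using u by (intro eq_vecI) (auto simp: rank_one_def)

lemma lam_mult_rank_one:
  assumes S: "S \<in> carrier_mat n n" and X: "X \<in> carrier_mat n n"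
  shows "lam S (X * rank_one n u r) = (S *\<^sub>v (X *\<^sub>v u)) $ r"
proof -
  have "(S *\<^sub>v (X *\<^sub>v col (rank_one n u r) i)) $ i = (if i = r then (S *\<^sub>v (X *\<^sub>v u)) $ r else 0)"
    if "i < n" for i
    using that S X by (auto simp: col_rank_one mult_mat_zero_vec)
  then show ?thesis
    using r S X by (simp add: lam_mult rank_one_carrier)
qed

lemma lam_rank_one_mult:
  assumes S: "S \<in> carrier_mat n n" and X: "X \<in> carrier_mat n n"
  shows "lam S (rank_one n u r * X) = (\<Sum>i<n. X $$ (r, i) * (S *\<^sub>v u) $ i)"
  using r u S X by (simp add: lam_mult rank_one_carrier rank_one_mult_vec mult_mat_vec)

end

section \<open>The polarization\<close>

definition flag_preimage :: "nat \<Rightarrow> (nat \<Rightarrow> nat) \<Rightarrow> 'a::field mat \<Rightarrow> 'a vec set" where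
  "flag_preimage n bk S = {v \<in> flag_space n bk 2. S *\<^sub>v v \<in> flag_space n bk 3}"

definition flag_polarization :: "nat \<Rightarrow> (nat \<Rightarrow> nat) \<Rightarrow> 'a::field mat \<Rightarrow> 'a mat set" where
  "flag_polarization n bk S = {X \<in> strict_block_upper n bk.
     (\<forall>u \<in> flag_space n bk 3. S *\<^sub>v (X *\<^sub>v u) \<in> flag_space n bk 3) \<and>
     (\<forall>u \<in> flag_preimage n bk S. \<forall>r<n. bk r = 2 \<longrightarrow> (S *\<^sub>v (X *\<^sub>v u)) $ r = 0)}"

context
  fixes n :: nat and bk :: "nat \<Rightarrow> nat" and S :: "'a::field mat"
  assumes S: "S \<in> carrier_mat n n"
begin

lemma flag_polarization_carrier: "X \<in> flag_polarization n bk S \<Longrightarrow> X \<in> carrier_mat n n"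
  by (simp add: flag_polarization_def strict_block_upper_def)

lemma zero_mat_in_flag_polarization: "0\<^sub>m n n \<in> flag_polarization n bk S"
  using S by (auto simp: flag_polarization_def flag_preimage_def strict_block_upper_def flag_space_def
      zero_mat_mult_vec mult_mat_zero_vec)

lemma flag_polarization_add:
  assumes X: "X \<in> flag_polarization n bk S" and Y: "Y \<in> flag_polarization n bk S"
  shows "X + Y \<in> flag_polarization n bk S"
proof -
  have carrier: "X \<in> carrier_mat n n" "Y \<in> carrier_mat n n"
    using X Y by (simp_all add: flag_polarization_carrier)
  have distrib: "S *\<^sub>v ((X + Y) *\<^sub>v u) = S *\<^sub>v (X *\<^sub>v u) + S *\<^sub>v (Y *\<^sub>v u)"
    if "u \<in> flag_space n bk k" for u k
    using that carrier S by (simp add: flag_space_def add_mult_distrib_mat_vec mult_add_distrib_mat_vec)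
  have "X + Y \<in> strict_block_upper n bk"
    using X Y by (auto simp: flag_polarization_def strict_block_upper_def)
  moreover have "S *\<^sub>v ((X + Y) *\<^sub>v u) \<in> flag_space n bk 3" if "u \<in> flag_space n bk 3" for u
    using X Y that by (simp add: distrib flag_space_add flag_polarization_def)
  moreover have "(S *\<^sub>v ((X + Y) *\<^sub>v u)) $ r = 0"
    if u: "u \<in> flag_preimage n bk S" and r: "r < n" "bk r = 2" for u r
  proof -
    have "u \<in> flag_space n bk 2"
      using u by (simp add: flag_preimage_def)
    then have "(S *\<^sub>v ((X + Y) *\<^sub>v u)) $ r = (S *\<^sub>v (X *\<^sub>v u)) $ r + (S *\<^sub>v (Y *\<^sub>v u)) $ r"
      using S r by (simp add: distrib)
    then show ?thesis
      using X Y u r by (simp add: flag_polarization_def)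
  qed
  ultimately show ?thesis
    by (simp add: flag_polarization_def)
qed

lemma flag_polarization_smult:
  assumes X: "X \<in> flag_polarization n bk S"
  shows "c \<cdot>\<^sub>m X \<in> flag_polarization n bk S"
proof -
  have carrier: "X \<in> carrier_mat n n"
    using X by (simp add: flag_polarization_carrier)
  have distrib: "S *\<^sub>v ((c \<cdot>\<^sub>m X) *\<^sub>v u) = c \<cdot>\<^sub>v (S *\<^sub>v (X *\<^sub>v u))"
    if "u \<in> flag_space n bk k" for u k
    using that carrier S by (simp add: flag_space_def smult_mat_mult_vec mult_mat_vec)
  have "c \<cdot>\<^sub>m X \<in> strict_block_upper n bk"
    using X by (auto simp: flag_polarization_def strict_block_upper_def)
  moreover have "S *\<^sub>v ((c \<cdot>\<^sub>m X) *\<^sub>v u) \<in> flag_space n bk 3" if "u \<in> flag_space n bk 3" for u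
    using X that by (simp add: distrib flag_space_smult flag_polarization_def)
  moreover have "(S *\<^sub>v ((c \<cdot>\<^sub>m X) *\<^sub>v u)) $ r = 0"
    if u: "u \<in> flag_preimage n bk S" and r: "r < n" "bk r = 2" for u r
  proof -
    have "u \<in> flag_space n bk 2"
      using u by (simp add: flag_preimage_def)
    then have "(S *\<^sub>v ((c \<cdot>\<^sub>m X) *\<^sub>v u)) $ r = c * (S *\<^sub>v (X *\<^sub>v u)) $ r"
      using S r by (simp add: distrib)
    then show ?thesis
      using X u r by (simp add: flag_polarization_def)
  qed
  ultimately show ?thesis
    by (simp add: flag_polarization_def)
qed

lemma mat_subspace_flag_polarization: "mat_subspace n (flag_polarization n bk S)"
  unfolding mat_subspace_def
  using flag_polarization_carrier zero_mat_in_flag_polarization flag_polarization_add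
    flag_polarization_smult
  by blast

lemma flag_polarization_mult:
  assumes X: "X \<in> flag_polarization n bk S" and Y: "Y \<in> flag_polarization n bk S"
  shows "X * Y \<in> flag_polarization n bk S"
proof -
  have X_block: "X \<in> strict_block_upper n bk" and Y_block: "Y \<in> strict_block_upper n bk"
    using X Y by (simp_all add: flag_polarization_def)
  have carrier: "X \<in> carrier_mat n n" "Y \<in> carrier_mat n n"
    using X Y by (simp_all add: flag_polarization_carrier)
  have X_flag: "S *\<^sub>v (X *\<^sub>v u) \<in> flag_space n bk 3" if "u \<in> flag_space n bk 3" for u
    using X that by (simp add: flag_polarization_def)
  have Y_flag: "S *\<^sub>v (Y *\<^sub>v u) \<in> flag_space n bk 3" if "u \<in> flag_space n bk 3" for u
    using Y that by (simp add: flag_polarization_def)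
  have assoc: "(X * Y) *\<^sub>v u = X *\<^sub>v (Y *\<^sub>v u)" if "u \<in> flag_space n bk k" for u k
    using that carrier by (simp add: flag_space_def)
  have "S *\<^sub>v ((X * Y) *\<^sub>v u) \<in> flag_space n bk 3" if u: "u \<in> flag_space n bk 3" for u
  proof -
    have "Y *\<^sub>v u \<in> flag_space n bk 3"
      using strict_block_upper_mult_flag_space[OF Y_block, of u 2] flag_space_mono[of 2 3] u by auto
    then show ?thesis
      using X_flag assoc[OF u] by simp
  qed
  moreover have "(S *\<^sub>v ((X * Y) *\<^sub>v u)) $ r = 0"
    if u: "u \<in> flag_preimage n bk S" and r: "r < n" "bk r = 2" for u r
  proof -
    have u2: "u \<in> flag_space n bk 2"
      using u by (simp add: flag_preimage_def)
    have "Y *\<^sub>v u \<in> flag_space n bk 2"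
      using strict_block_upper_mult_flag_space[OF Y_block, of u 1] flag_space_mono[of 1 2] u2
      by (auto simp: numeral_2_eq_2)
    moreover have "S *\<^sub>v (Y *\<^sub>v u) \<in> flag_space n bk 3"
      using Y_flag flag_space_mono[of 2 3] u2 by auto
    ultimately have "Y *\<^sub>v u \<in> flag_preimage n bk S"
      by (simp add: flag_preimage_def)
    then show ?thesis
      using X r assoc[OF u2] by (simp add: flag_polarization_def)
  qed
  ultimately show ?thesis
    using strict_block_upper_mult[OF X_block Y_block] by (simp add: flag_polarization_def)
qed

lemma rank_one_in_flag_polarization:
  assumes r: "r < n" "2 \<le> bk r" and u: "u \<in> flag_space n bk (bk r)"
    and Su: "bk r = 2 \<Longrightarrow> S *\<^sub>v u \<in> flag_space n bk 3"
  shows "rank_one n u r \<in> flag_polarization n bk S"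
proof -
  have u_carrier: "u \<in> carrier_vec n"
    using u by (simp add: flag_space_def)
  have image: "S *\<^sub>v (rank_one n u r *\<^sub>v w) = w $ r \<cdot>\<^sub>v (S *\<^sub>v u)" if "w \<in> carrier_vec n" for w
    using that u_carrier r S by (simp add: rank_one_mult_vec mult_mat_vec)
  have "rank_one n u r \<in> strict_block_upper n bk"
    using u by (auto simp: strict_block_upper_def rank_one_def flag_space_def)
  moreover have "S *\<^sub>v (rank_one n u r *\<^sub>v w) \<in> flag_space n bk 3" if w: "w \<in> flag_space n bk 3" for w
  proof -
    have "w \<in> carrier_vec n"
      using w by (simp add: flag_space_def)
    moreover have "w $ r \<cdot>\<^sub>v (S *\<^sub>v u) \<in> flag_space n bk 3"
    proof (cases "bk r = 2")
      case True
      then show ?thesis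
        using Su by (simp add: flag_space_smult)
    next
      case False
      then have "w $ r = 0"
        using w r by (simp add: flag_space_def)
      then show ?thesis
        using S u_carrier by (simp add: flag_space_def)
    qed
    ultimately show ?thesis
      by (simp add: image)
  qed
  moreover have "(S *\<^sub>v (rank_one n u r *\<^sub>v w)) $ r' = 0"
    if w: "w \<in> flag_preimage n bk S" and r': "r' < n" for w r'
  proof -
    have "w $ r = 0"
      using w r by (simp add: flag_preimage_def flag_space_def)
    then show ?thesis
      using w r' S by (simp add: image flag_preimage_def flag_space_def)
  qed
  ultimately show ?thesis
    by (simp add: flag_polarization_def)
qed

context
  assumes bk_le_3: "\<And>i. bk i \<le> 3"
begin

lemma lam_mult_flag_polarization:
  assumes X: "X \<in> flag_polarization n bk S" and Y: "Y \<in> flag_polarization n bk S"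
  shows "lam S (X * Y) = 0"
proof -
  have X_block: "X \<in> strict_block_upper n bk" and Y_block: "Y \<in> strict_block_upper n bk"
    using X Y by (simp_all add: flag_polarization_def)
  have carrier: "X \<in> carrier_mat n n" "Y \<in> carrier_mat n n"
    using X Y by (simp_all add: flag_polarization_carrier)
  have "(S *\<^sub>v (X *\<^sub>v col Y i)) $ i = 0" if i: "i < n" for i
  proof -
    have col: "col Y i \<in> flag_space n bk (bk i)"
      using col_in_flag_space[OF Y_block i] .
    consider "bk i \<le> 1" | "bk i = 2" | "bk i = 3"
      using bk_le_3[of i] by linarith
    then show ?thesis
    proof cases
      case 1
      then have "col Y i \<in> flag_space n bk (Suc 0)"
        using col flag_space_mono[of "bk i" "Suc 0"] by auto
      then have "X *\<^sub>v col Y i = 0\<^sub>v n"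
        using strict_block_upper_mult_flag_space[OF X_block] flag_space_zero by blast
      then show ?thesis
        using S i by (simp add: mult_mat_zero_vec)
    next
      case 2
      have "unit_vec n i \<in> flag_space n bk 3"
        using 2 by (simp add: unit_vec_in_flag_space)
      then have "S *\<^sub>v col Y i \<in> flag_space n bk 3"
        using Y unfolding col_eq_mult_unit_vec[OF carrier(2) i] flag_polarization_def by blast
      then have "col Y i \<in> flag_preimage n bk S"
        using col 2 by (simp add: flag_preimage_def)
      then show ?thesis
        using X i 2 by (simp add: flag_polarization_def)
    next
      case 3
      then have "S *\<^sub>v (X *\<^sub>v col Y i) \<in> flag_space n bk 3"
        using X col by (simp add: flag_polarization_def)
      then show ?thesis
        using i 3 by (simp add: flag_space_def)
    qed
  qed
  then show ?thesis
    using S carrier by (simp add: lam_mult)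
qed

lemma lam_rank_one_mult_eq_0:
  assumes X: "X \<in> strict_block_upper n bk" and r: "r < n" "2 \<le> bk r" and u: "u \<in> carrier_vec n"
    and Su: "bk r = 2 \<Longrightarrow> S *\<^sub>v u \<in> flag_space n bk 3"
  shows "lam S (rank_one n u r * X) = 0"
proof -
  have "lam S (rank_one n u r * X) = (\<Sum>i<n. X $$ (r, i) * (S *\<^sub>v u) $ i)"
    using S u r X by (simp add: lam_rank_one_mult strict_block_upper_carrier)
  also have "\<dots> = 0"
  proof (rule sum.neutral, rule ballI)
    fix i assume "i \<in> {..<n}"
    then have i: "i < n" by simp
    show "X $$ (r, i) * (S *\<^sub>v u) $ i = 0"
    proof (cases "X $$ (r, i) = 0")
      case False
      then have "bk r < bk i"
        using strict_block_upper_nonzero[OF X r(1) i] by simp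
      then have "bk r = 2" "bk i = 3"
        using r(2) bk_le_3[of i] by auto
      then show ?thesis
        using Su i by (simp add: flag_space_def)
    qed simp
  qed
  finally show ?thesis .
qed

lemma flag_polarization_maximal:
  assumes X: "X \<in> strict_block_upper n bk"
    and orth: "\<And>Y. Y \<in> flag_polarization n bk S \<Longrightarrow> lam S (X * Y) = lam S (Y * X)"
  shows "X \<in> flag_polarization n bk S"
proof -
  have carrier: "X \<in> carrier_mat n n"
    using X by (simp add: strict_block_upper_carrier)
  have test: "(S *\<^sub>v (X *\<^sub>v u)) $ r = 0"
    if r: "r < n" "2 \<le> bk r" and u: "u \<in> flag_space n bk (bk r)"
      and Su: "bk r = 2 \<Longrightarrow> S *\<^sub>v u \<in> flag_space n bk 3" for u r
  proof -
    have u_carrier: "u \<in> carrier_vec n"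
      using u by (simp add: flag_space_def)
    have "(S *\<^sub>v (X *\<^sub>v u)) $ r = lam S (X * rank_one n u r)"
      using S carrier u_carrier r by (simp add: lam_mult_rank_one)
    also have "\<dots> = lam S (rank_one n u r * X)"
      using orth rank_one_in_flag_polarization[OF r u Su] by simp
    also have "\<dots> = 0"
      using lam_rank_one_mult_eq_0[OF X r u_carrier Su] .
    finally show ?thesis .
  qed
  have "S *\<^sub>v (X *\<^sub>v u) \<in> flag_space n bk 3" if u: "u \<in> flag_space n bk 3" for u
  proof -
    have "(S *\<^sub>v (X *\<^sub>v u)) $ r = 0" if r: "r < n" "3 \<le> bk r" for r
      using test[of r u] r u bk_le_3[of r] by simp
    then show ?thesis
      using S carrier u by (simp add: flag_space_def)
  qed
  moreover have "(S *\<^sub>v (X *\<^sub>v u)) $ r = 0"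
    if u: "u \<in> flag_preimage n bk S" and r: "r < n" "bk r = 2" for u r
    using test[of r u] u r by (simp add: flag_preimage_def)
  ultimately show ?thesis
    using X by (simp add: flag_polarization_def)
qed

theorem assoc_polarization_flag_polarization:
  "assoc_polarization n (strict_block_upper n bk) (lam S) (flag_polarization n bk S)"
proof (rule assoc_polarizationI[OF S mat_subspace_flag_polarization])
  show "flag_polarization n bk S \<subseteq> strict_block_upper n bk"
    by (auto simp: flag_polarization_def)
qed (fact flag_polarization_mult lam_mult_flag_polarization flag_polarization_maximal)+

end

end

theorem theorem3p2:
  fixes n1 n2 n3 n4 :: nat
    and S :: "'a::{finite,field} mat"
  assumes "0 < n1" "0 < n2" "0 < n3" "0 < n4"
    and "S \<in> transpose_mat ` (pattern_alg n1 n2 n3 n4 :: 'a mat set)"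
  shows "\<exists>P. assoc_polarization (n1+n2+n3+n4) (pattern_alg n1 n2 n3 n4) (lam S) P"
proof -
  have g: "pattern_alg n1 n2 n3 n4 = (strict_block_upper (n1+n2+n3+n4) (blk n1 n2 n3) :: 'a mat set)"
    unfolding pattern_alg_def strict_block_upper_def by auto
  have S: "S \<in> carrier_mat (n1+n2+n3+n4) (n1+n2+n3+n4)"
    using assms(5) by (auto simp: pattern_alg_def)
  have "blk n1 n2 n3 i \<le> 3" for i
    by (simp add: blk_def)
  then show ?thesis
    unfolding g using assoc_polarization_flag_polarization[OF S] by blast
qed

end
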